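(* Let $n$ be a positive integer, let $\theta=\lambda/\mu$ be a skew Young diagram such that every column of $\theta$ contains at most $n$ boxes, and let $\beta$ be a nonzero complex number. Then $$G_\theta(\beta,\dots,\beta\mid -\beta^{-1})=\beta^{|\theta|},$$ where all $n$ variables are specialized to $\beta$.
   Context: Partitions are identified with Young diagrams $\{(i,j)\in\mathbb{Z}_{>0}^2 : j\le\lambda_i\}$ (row index $i$ increasing downward). For partitions $\mu\subseteq\lambda$, $\theta=\lambda/\mu=\lambda\setminus\mu$ and $|\theta|$ is its number of boxes. A set-valued tableau of shape $\theta$ with entries in $[n]=\{1,\dots,n\}$ assigns a non-empty subset $T_{i,j}\subseteq[n]$ to each box $(i,j)\in\theta$ such that $\max T_{i,j}\le\min T_{i,j+1}$ whenever $(i,j),(i,j+1)\in\theta$ and $\max T_{i,j}<\min T_{i+1,j}$ whenever $(i,j),(i+1,j)\in\theta$; $\mathrm{SVT}(\theta,n)$ is the set of these. For such $T$, $|T|=\sum_{(i,j)\in\theta}|T_{i,j}|$, $\omega_k(T)$ is the number of boxes whose set contains $k$, and $x^{\omega(T)}=\prod_{k=1}^n x_k^{\omega_k(T)}$. The skew Grothendieck polynomial is $G_\theta(x_1,\dots,x_n\mid\beta)=\sum_{T\in\mathrm{SVT}(\theta,n)}\beta^{|T|-|\theta|}x^{\omega(T)}$. *)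

theory Defs
  imports Complex_Main
begin

definition is_partition :: "nat list \<Rightarrow> bool" where
  "is_partition lam \<longleftrightarrow> sorted_wrt (\<ge>) lam \<and> (\<forall>p\<in>set lam. 0 < p)"

definition young :: "nat list \<Rightarrow> (nat \<times> nat) set" where
  "young lam = {(i, j). 1 \<le> i \<and> i \<le> length lam \<and> 1 \<le> j \<and> j \<le> lam ! (i - 1)}"

definition skew :: "nat list \<Rightarrow> nat list \<Rightarrow> (nat \<times> nat) set" where
  "skew lam mu = young lam - young mu"

definition SVT :: "(nat \<times> nat) set \<Rightarrow> nat \<Rightarrow> ((nat \<times> nat) \<Rightarrow> nat set) set" where
  "SVT theta n = {T.
     (\<forall>b. b \<notin> theta \<longrightarrow> T b = {}) \<and>
     (\<forall>b\<in>theta. T b \<noteq> {} \<and> T b \<subseteq> {1..n}) \<and>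
     (\<forall>i j. (i, j) \<in> theta \<and> (i, j + 1) \<in> theta \<longrightarrow> Max (T (i, j)) \<le> Min (T (i, j + 1))) \<and>
     (\<forall>i j. (i, j) \<in> theta \<and> (i + 1, j) \<in> theta \<longrightarrow> Max (T (i, j)) < Min (T (i + 1, j))) }"

definition tsize :: "(nat \<times> nat) set \<Rightarrow> ((nat \<times> nat) \<Rightarrow> nat set) \<Rightarrow> nat" where
  "tsize theta T = (\<Sum>b\<in>theta. card (T b))"

definition omega :: "(nat \<times> nat) set \<Rightarrow> ((nat \<times> nat) \<Rightarrow> nat set) \<Rightarrow> nat \<Rightarrow> nat" where
  "omega theta T k = card {b\<in>theta. k \<in> T b}"

definition groth :: "(nat \<times> nat) set \<Rightarrow> nat \<Rightarrow> (nat \<Rightarrow> complex) \<Rightarrow> complex \<Rightarrow> complex" where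
  "groth theta n x beta =
     (\<Sum>T\<in>SVT theta n. beta ^ (tsize theta T - card theta) * (\<Prod>k=1..n. x k ^ omega theta T k))"

end

theory Submission
  imports Defs
begin

text \<open>
  With all x_k = \<beta> and \<beta> replaced by -1/\<beta>, a tableau T contributes
  \<beta>^|\<theta>| (-1)^(|T| - |\<theta>|), so it suffices that the signed count of SVT(\<theta>, n) is 1.
  Call a box of \<theta> a bottom if the box below it is not in \<theta>, and call a bottom b a site of T
  if T_b \<noteq> {n} and the right neighbour of b, if it lies in \<theta>, is filled with {n}.
  Adding or removing n at a site yields a tableau with the same sites and opposite sign, so
  tableaux with a site cancel in pairs. In a tableau without sites every bottom is filled with {n}
  (otherwise the rightmost bottom that is not would be a site); erasing the bottoms is a
  sign-preserving bijection onto the tableaux with entries in [n-1] of the shape without its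
  bottoms, whose columns are one box shorter.
\<close>

lemma finite_SVT:
  assumes "finite \<theta>"
  shows "finite (SVT \<theta> n)"
proof (rule finite_subset)
  show "SVT \<theta> n \<subseteq> {T. \<forall>b. (b \<in> \<theta> \<longrightarrow> T b \<in> Pow {1..n}) \<and> (b \<notin> \<theta> \<longrightarrow> T b = {})}"
    unfolding SVT_def by auto
  show "finite {T. \<forall>b. (b \<in> \<theta> \<longrightarrow> T b \<in> Pow {1..n}) \<and> (b \<notin> \<theta> \<longrightarrow> T b = ({}::nat set))}"
    by (rule finite_set_of_finite_funs) (use assms in auto)
qed

lemma SVT_outside: "T \<in> SVT \<theta> n \<Longrightarrow> c \<notin> \<theta> \<Longrightarrow> T c = {}"
  unfolding SVT_def by blast

lemma SVT_box:
  assumes "T \<in> SVT \<theta> n" "c \<in> \<theta>"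
  shows "T c \<noteq> {}" "T c \<subseteq> {1..n}" "finite (T c)"
  using assms finite_subset[of "T c" "{1..n}"] unfolding SVT_def by auto

lemma card_le_tsize:
  assumes "T \<in> SVT \<theta> n" "finite \<theta>"
  shows "card \<theta> \<le> tsize \<theta> T"
proof -
  have "card \<theta> = (\<Sum>b\<in>\<theta>. 1)" by simp
  also have "\<dots> \<le> (\<Sum>b\<in>\<theta>. card (T b))"
  proof (rule sum_mono)
    fix b assume "b \<in> \<theta>"
    then show "1 \<le> card (T b)"
      using SVT_box[OF assms(1)] by (simp add: Suc_leI card_gt_0_iff)
  qed
  finally show ?thesis unfolding tsize_def .
qed

lemma tsize_fun_upd:
  assumes "finite \<theta>" "b \<in> \<theta>"
  shows "tsize \<theta> (T(b := X)) + card (T b) = tsize \<theta> T + card X"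
  using assms unfolding tsize_def by (simp add: sum.remove)

lemma sum_omega_eq_tsize:
  assumes T: "T \<in> SVT \<theta> n" and fin: "finite \<theta>"
  shows "(\<Sum>k=1..n. omega \<theta> T k) = tsize \<theta> T"
proof -
  have "(\<Sum>k=1..n. omega \<theta> T k) = (\<Sum>k=1..n. \<Sum>b\<in>\<theta>. if k \<in> T b then 1 else 0)"
    unfolding omega_def using fin by (simp add: sum.inter_filter[symmetric])
  also have "\<dots> = (\<Sum>b\<in>\<theta>. \<Sum>k=1..n. if k \<in> T b then 1 else 0)" by (rule sum.swap)
  also have "\<dots> = (\<Sum>b\<in>\<theta>. card (T b))"
  proof (rule sum.cong)
    fix b assume "b \<in> \<theta>"
    then have "{1..n} \<inter> T b = T b" using SVT_box(2)[OF T] by blast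
    then show "(\<Sum>k=1..n. if k \<in> T b then 1 else (0::nat)) = card (T b)"
      by (simp add: sum.If_cases)
  qed simp
  finally show ?thesis unfolding tsize_def .
qed

definition toggle :: "'a \<Rightarrow> 'a set \<Rightarrow> 'a set" where
  "toggle a X = (if a \<in> X then X - {a} else insert a X)"

lemma toggle_toggle [simp]: "toggle a (toggle a X) = X"
  unfolding toggle_def by auto

lemma toggle_eq_singleton_iff: "toggle a X = {a} \<longleftrightarrow> X = {}"
  unfolding toggle_def by auto

lemma card_toggle:
  assumes "finite X"
  shows "card (toggle a X) = Suc (card X) \<or> Suc (card (toggle a X)) = card X"
  using assms card_Suc_Diff1[of X a] unfolding toggle_def by auto

lemma Min_toggle:
  assumes "finite X" "x \<in> X" "x < a"
  shows "Min (toggle a X) = Min X"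
proof -
  have "Min X < a" using assms Min_le le_less_trans by blast
  show ?thesis
  proof (cases "a \<in> X")
    case True
    have "Min X \<in> X - {a}" using \<open>Min X < a\<close> assms Min_in by fastforce
    then show ?thesis unfolding toggle_def using True assms by (intro Min_eqI) auto
  next
    case False
    have "X \<noteq> {}" using assms(2) by blast
    then show ?thesis unfolding toggle_def using False \<open>Min X < a\<close> assms(1) by simp
  qed
qed

text \<open>The only property of skew shapes that the argument needs.\<close>

definition skew_closed :: "(nat \<times> nat) set \<Rightarrow> bool" where
  "skew_closed \<theta> \<longleftrightarrow>
     (\<forall>i j. (i, j) \<in> \<theta> \<and> (i, j + 1) \<in> \<theta> \<and> (i + 1, j + 1) \<in> \<theta> \<longrightarrow> (i + 1, j) \<in> \<theta>)"

definition column_bottoms :: "(nat \<times> nat) set \<Rightarrow> (nat \<times> nat) set" where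
  "column_bottoms \<theta> = {(i, j). (i, j) \<in> \<theta> \<and> (i + 1, j) \<notin> \<theta>}"

lemma column_bottoms_subset: "column_bottoms \<theta> \<subseteq> \<theta>"
  unfolding column_bottoms_def by auto

lemma column_bottoms_right_neighbour:
  assumes "skew_closed \<theta>" "(i, j) \<in> column_bottoms \<theta>" "(i, j + 1) \<in> \<theta>"
  shows "(i, j + 1) \<in> column_bottoms \<theta>"
  using assms unfolding skew_closed_def column_bottoms_def by blast

lemma skew_closed_diff_column_bottoms:
  assumes closed: "skew_closed \<theta>"
  shows "skew_closed (\<theta> - column_bottoms \<theta>)"
  unfolding skew_closed_def
proof (intro allI impI)
  fix i j
  assume square: "(i, j) \<in> \<theta> - column_bottoms \<theta> \<and> (i, j + 1) \<in> \<theta> - column_bottoms \<theta> \<and>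
                  (i + 1, j + 1) \<in> \<theta> - column_bottoms \<theta>"
  have fill: "\<And>i j. (i, j) \<in> \<theta> \<Longrightarrow> (i, j + 1) \<in> \<theta> \<Longrightarrow> (i + 1, j + 1) \<in> \<theta> \<Longrightarrow> (i + 1, j) \<in> \<theta>"
    using closed unfolding skew_closed_def by blast
  have "(i + 1, j) \<in> \<theta>" using square fill by blast
  moreover have "(i + 2, j + 1) \<in> \<theta>" using square unfolding column_bottoms_def by auto
  ultimately have "(i + 2, j) \<in> \<theta>" using square fill[of "i + 1" j] by auto
  with \<open>(i + 1, j) \<in> \<theta>\<close> show "(i + 1, j) \<in> \<theta> - column_bottoms \<theta>"
    unfolding column_bottoms_def by simp
qed

lemma finite_column:
  assumes "finite \<theta>"
  shows "finite {i. (i, j) \<in> \<theta>}"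
  using finite_imageI[OF assms, of fst] by (rule rev_finite_subset) force

lemma card_column_diff_column_bottoms:
  assumes fin: "finite \<theta>" and column: "card {i. (i, j) \<in> \<theta>} \<le> Suc m"
  shows "card {i. (i, j) \<in> \<theta> - column_bottoms \<theta>} \<le> m"
proof (cases "{i. (i, j) \<in> \<theta>} = {}")
  case True
  then show ?thesis by auto
next
  case False
  let ?C = "{i. (i, j) \<in> \<theta>}"
  have "finite ?C" using finite_column[OF fin] .
  define i0 where "i0 = Max ?C"
  have "i0 \<in> ?C" "i0 + 1 \<notin> ?C"
    unfolding i0_def using Max_in[OF \<open>finite ?C\<close> False] Max_ge[OF \<open>finite ?C\<close>, of "Max ?C + 1"] by auto
  then have "(i0, j) \<in> column_bottoms \<theta>" unfolding column_bottoms_def by simp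
  then have "{i. (i, j) \<in> \<theta> - column_bottoms \<theta>} \<subseteq> ?C - {i0}" by auto
  then have "card {i. (i, j) \<in> \<theta> - column_bottoms \<theta>} \<le> card (?C - {i0})"
    using \<open>finite ?C\<close> by (simp add: card_mono)
  also have "\<dots> = card ?C - 1" using \<open>i0 \<in> ?C\<close> \<open>finite ?C\<close> by simp
  finally show ?thesis using column by linarith
qed

lemma empty_if_column_cards_zero:
  assumes "finite \<theta>" "\<forall>j. card {i. (i, j) \<in> \<theta>} = 0"
  shows "\<theta> = {}"
proof (rule ccontr)
  assume "\<theta> \<noteq> {}"
  then obtain i j where "(i, j) \<in> \<theta>" by auto
  moreover have "card {i. (i, j) \<in> \<theta>} = 0" using assms(2) by blast
  ultimately show False using finite_column[OF assms(1), of j] by auto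
qed

definition toggle_sites ::
    "(nat \<times> nat) set \<Rightarrow> nat \<Rightarrow> (nat \<times> nat \<Rightarrow> nat set) \<Rightarrow> (nat \<times> nat) set" where
  "toggle_sites \<theta> n T = {(i, j). (i, j) \<in> column_bottoms \<theta> \<and> T (i, j) \<noteq> {n} \<and>
                                 ((i, j + 1) \<in> \<theta> \<longrightarrow> T (i, j + 1) = {n})}"

text \<open>
  Toggling at a site does not change the set of sites (toggle_sites_fun_upd_toggle), so this is an
  involution whichever site the choice operator picks.
\<close>

definition toggle_at_site ::
    "(nat \<times> nat) set \<Rightarrow> nat \<Rightarrow> (nat \<times> nat \<Rightarrow> nat set) \<Rightarrow> (nat \<times> nat \<Rightarrow> nat set)" where
  "toggle_at_site \<theta> n T = (let b = SOME b. b \<in> toggle_sites \<theta> n T in T(b := toggle n (T b)))"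

definition svt_sign :: "(nat \<times> nat) set \<Rightarrow> (nat \<times> nat \<Rightarrow> nat set) \<Rightarrow> int" where
  "svt_sign \<theta> T = (-1) ^ (tsize \<theta> T - card \<theta>)"

lemma fun_upd_toggle_in_SVT:
  assumes T: "T \<in> SVT \<theta> n" and b: "b \<in> toggle_sites \<theta> n T"
  shows "T(b := toggle n (T b)) \<in> SVT \<theta> n"
proof -
  obtain i j where bij: "b = (i, j)" by fastforce
  have b_bottom: "(i, j) \<in> \<theta>" "(i + 1, j) \<notin> \<theta>" and "T b \<noteq> {n}"
    and right: "(i, j + 1) \<in> \<theta> \<Longrightarrow> T (i, j + 1) = {n}"
    using b unfolding bij toggle_sites_def column_bottoms_def by auto
  moreover have "T b \<noteq> {}" "T b \<subseteq> {1..n}" "finite (T b)"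
    using SVT_box[OF T] b_bottom(1) bij by auto
  ultimately obtain x where x: "x \<in> T b" "x < n" by fastforce
  with \<open>finite (T b)\<close> have Min_eq: "Min (toggle n (T b)) = Min (T b)" using Min_toggle by blast
  have new_box: "toggle n (T b) \<noteq> {}" "toggle n (T b) \<subseteq> {1..n}"
    using x \<open>T b \<subseteq> {1..n}\<close> unfolding toggle_def by auto
  then have Max_le: "Max (toggle n (T b)) \<le> n"
    by (auto simp: finite_subset[OF new_box(2)])
  show ?thesis
    unfolding SVT_def mem_Collect_eq
  proof (intro conjI allI impI ballI)
    fix c assume "c \<notin> \<theta>"
    then show "(T(b := toggle n (T b))) c = {}" using SVT_outside[OF T] b_bottom(1) bij by auto
  next
    fix c assume "c \<in> \<theta>"
    then show "(T(b := toggle n (T b))) c \<noteq> {}" "(T(b := toggle n (T b))) c \<subseteq> {1..n}"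
      using T new_box unfolding SVT_def by auto
  next
    fix i' j' assume "(i', j') \<in> \<theta> \<and> (i', j' + 1) \<in> \<theta>"
    then show "Max ((T(b := toggle n (T b))) (i', j')) \<le> Min ((T(b := toggle n (T b))) (i', j' + 1))"
      using T Max_le Min_eq right unfolding SVT_def bij by auto
  next
    fix i' j' assume "(i', j') \<in> \<theta> \<and> (i' + 1, j') \<in> \<theta>"
    then show "Max ((T(b := toggle n (T b))) (i', j')) < Min ((T(b := toggle n (T b))) (i' + 1, j'))"
      using T Min_eq b_bottom(2) unfolding SVT_def bij by auto
  qed
qed

lemma toggle_sites_fun_upd_toggle:
  assumes T: "T \<in> SVT \<theta> n" and b: "b \<in> toggle_sites \<theta> n T"
  shows "toggle_sites \<theta> n (T(b := toggle n (T b))) = toggle_sites \<theta> n T"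
proof -
  have "T b \<noteq> {}" "T b \<noteq> {n}"
    using T b unfolding SVT_def toggle_sites_def column_bottoms_def by auto
  then have "toggle n (T b) \<noteq> {n}" by (simp add: toggle_eq_singleton_iff)
  then have "(T(b := toggle n (T b))) c = {n} \<longleftrightarrow> T c = {n}" for c
    using \<open>T b \<noteq> {n}\<close> by simp
  then show ?thesis unfolding toggle_sites_def by presburger
qed

lemma svt_sign_fun_upd_toggle:
  assumes fin: "finite \<theta>" and T: "T \<in> SVT \<theta> n" and b: "b \<in> toggle_sites \<theta> n T"
  shows "svt_sign \<theta> (T(b := toggle n (T b))) = - svt_sign \<theta> T"
proof -
  let ?T' = "T(b := toggle n (T b))"
  have "b \<in> \<theta>" using b unfolding toggle_sites_def column_bottoms_def by auto
  then have "finite (T b)" using SVT_box(3)[OF T] by blast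
  then have "tsize \<theta> ?T' = Suc (tsize \<theta> T) \<or> Suc (tsize \<theta> ?T') = tsize \<theta> T"
    using card_toggle[of "T b" n] tsize_fun_upd[OF fin \<open>b \<in> \<theta>\<close>, of T "toggle n (T b)"] by linarith
  moreover have "card \<theta> \<le> tsize \<theta> T" "card \<theta> \<le> tsize \<theta> ?T'"
    using card_le_tsize fun_upd_toggle_in_SVT[OF T b] T fin by auto
  ultimately have "tsize \<theta> ?T' - card \<theta> = Suc (tsize \<theta> T - card \<theta>) \<or>
                   tsize \<theta> T - card \<theta> = Suc (tsize \<theta> ?T' - card \<theta>)"
    by linarith
  then show ?thesis unfolding svt_sign_def by auto
qed

lemma toggle_at_site_involution:
  assumes fin: "finite \<theta>" and T: "T \<in> SVT \<theta> n" and sites: "toggle_sites \<theta> n T \<noteq> {}"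
  shows "toggle_at_site \<theta> n T \<in> SVT \<theta> n"
    and "toggle_sites \<theta> n (toggle_at_site \<theta> n T) = toggle_sites \<theta> n T"
    and "toggle_at_site \<theta> n (toggle_at_site \<theta> n T) = T"
    and "svt_sign \<theta> (toggle_at_site \<theta> n T) = - svt_sign \<theta> T"
proof -
  define b where "b = (SOME b. b \<in> toggle_sites \<theta> n T)"
  have b: "b \<in> toggle_sites \<theta> n T" unfolding b_def using sites some_in_eq by blast
  have eq: "toggle_at_site \<theta> n T = T(b := toggle n (T b))"
    unfolding toggle_at_site_def b_def Let_def ..
  show "toggle_at_site \<theta> n T \<in> SVT \<theta> n"
    unfolding eq using fun_upd_toggle_in_SVT[OF T b] .
  show same_sites: "toggle_sites \<theta> n (toggle_at_site \<theta> n T) = toggle_sites \<theta> n T"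
    unfolding eq using toggle_sites_fun_upd_toggle[OF T b] .
  show "toggle_at_site \<theta> n (toggle_at_site \<theta> n T) = T"
    unfolding toggle_at_site_def [of _ _ "toggle_at_site \<theta> n T"] same_sites b_def[symmetric] Let_def
    unfolding eq by simp
  show "svt_sign \<theta> (toggle_at_site \<theta> n T) = - svt_sign \<theta> T"
    unfolding eq using svt_sign_fun_upd_toggle[OF fin T b] .
qed

lemma sum_svt_sign_with_toggle_sites:
  assumes "finite \<theta>"
  shows "(\<Sum>T\<in>{T\<in>SVT \<theta> n. toggle_sites \<theta> n T \<noteq> {}}. svt_sign \<theta> T) = 0"
proof -
  let ?S = "{T\<in>SVT \<theta> n. toggle_sites \<theta> n T \<noteq> {}}"
  have "(\<Sum>T\<in>?S. svt_sign \<theta> T) = (\<Sum>T\<in>?S. - svt_sign \<theta> T)"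
    by (rule sum.reindex_bij_witness[where i = "toggle_at_site \<theta> n" and j = "toggle_at_site \<theta> n"])
       (use toggle_at_site_involution[OF assms] in auto)
  then show ?thesis by (simp add: sum_negf)
qed

lemma toggle_sites_empty_imp_bottoms:
  assumes fin: "finite \<theta>" and closed: "skew_closed \<theta>"
    and no_sites: "toggle_sites \<theta> n T = {}" and b: "b \<in> column_bottoms \<theta>"
  shows "T b = {n}"
proof (rule ccontr)
  let ?B = "{c \<in> column_bottoms \<theta>. T c \<noteq> {n}}"
  assume "T b \<noteq> {n}"
  then have "?B \<noteq> {}" using b by blast
  moreover have "finite ?B"
    using fin by (rule rev_finite_subset) (use column_bottoms_subset in auto)
  define j where "j = Max (snd ` ?B)"
  have "j \<in> snd ` ?B" unfolding j_def using \<open>finite ?B\<close> \<open>?B \<noteq> {}\<close> by simp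
  then obtain i where ij: "(i, j) \<in> ?B" by force
  have rightmost: "snd c \<le> j" if "c \<in> ?B" for c
    unfolding j_def using \<open>finite ?B\<close> that by simp
  have "(i, j) \<notin> toggle_sites \<theta> n T" using no_sites by simp
  then have "(i, j + 1) \<in> \<theta>" "T (i, j + 1) \<noteq> {n}"
    using ij unfolding toggle_sites_def by auto
  then have "(i, j + 1) \<in> ?B"
    using column_bottoms_right_neighbour[OF closed] ij by blast
  then show False using rightmost by fastforce
qed

lemma SVT_less_off_column_bottoms:
  assumes T: "T \<in> SVT \<theta> n" and c: "c \<in> \<theta> - column_bottoms \<theta>" and x: "x \<in> T c"
  shows "x < n"
proof -
  obtain i j where c_eq: "c = (i, j)" by fastforce
  have below: "(i, j) \<in> \<theta>" "(i + 1, j) \<in> \<theta>"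
    using c unfolding c_eq column_bottoms_def by auto
  then have "Max (T (i, j)) < Min (T (i + 1, j))"
    using T unfolding SVT_def by auto
  moreover have "x \<le> Max (T (i, j))" using x c_eq SVT_box(3)[OF T below(1)] by simp
  moreover have "Min (T (i + 1, j)) \<in> {1..n}"
    using SVT_box[OF T below(2)] Min_in by blast
  ultimately show ?thesis by auto
qed

definition clear_bottoms ::
    "(nat \<times> nat) set \<Rightarrow> (nat \<times> nat \<Rightarrow> nat set) \<Rightarrow> (nat \<times> nat \<Rightarrow> nat set)" where
  "clear_bottoms \<theta> T = (\<lambda>c. if c \<in> column_bottoms \<theta> then {} else T c)"

definition fill_bottoms ::
    "(nat \<times> nat) set \<Rightarrow> nat \<Rightarrow> (nat \<times> nat \<Rightarrow> nat set) \<Rightarrow> (nat \<times> nat \<Rightarrow> nat set)" where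
  "fill_bottoms \<theta> n T = (\<lambda>c. if c \<in> column_bottoms \<theta> then {n} else T c)"

lemma clear_bottoms_in_SVT:
  assumes T: "T \<in> SVT \<theta> (Suc m)"
  shows "clear_bottoms \<theta> T \<in> SVT (\<theta> - column_bottoms \<theta>) m"
  unfolding SVT_def mem_Collect_eq
proof (intro conjI allI impI ballI)
  fix c assume c: "c \<notin> \<theta> - column_bottoms \<theta>"
  then show "clear_bottoms \<theta> T c = {}"
    using SVT_outside[OF T, of c] unfolding clear_bottoms_def by auto
next
  fix c assume c: "c \<in> \<theta> - column_bottoms \<theta>"
  then show "clear_bottoms \<theta> T c \<noteq> {}"
    using T unfolding clear_bottoms_def SVT_def by auto
  have "T c \<subseteq> {1..Suc m}" using T c unfolding SVT_def by auto
  then show "clear_bottoms \<theta> T c \<subseteq> {1..m}"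
    using SVT_less_off_column_bottoms[OF T c] c unfolding clear_bottoms_def by fastforce
next
  fix i j assume "(i, j) \<in> \<theta> - column_bottoms \<theta> \<and> (i, j + 1) \<in> \<theta> - column_bottoms \<theta>"
  then show "Max (clear_bottoms \<theta> T (i, j)) \<le> Min (clear_bottoms \<theta> T (i, j + 1))"
    using T unfolding clear_bottoms_def SVT_def by auto
next
  fix i j assume "(i, j) \<in> \<theta> - column_bottoms \<theta> \<and> (i + 1, j) \<in> \<theta> - column_bottoms \<theta>"
  then show "Max (clear_bottoms \<theta> T (i, j)) < Min (clear_bottoms \<theta> T (i + 1, j))"
    using T unfolding clear_bottoms_def SVT_def by auto
qed

lemma fill_bottoms_in_SVT:
  assumes closed: "skew_closed \<theta>" and T: "T \<in> SVT (\<theta> - column_bottoms \<theta>) m"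
  shows "fill_bottoms \<theta> (Suc m) T \<in> SVT \<theta> (Suc m)"
proof -
  have Max_less: "Max (T c) < Suc m" if "c \<in> \<theta> - column_bottoms \<theta>" for c
    using SVT_box[OF T that] Max_in[of "T c"] by fastforce
  show ?thesis
    unfolding SVT_def mem_Collect_eq
  proof (intro conjI allI impI ballI)
    fix c assume "c \<notin> \<theta>"
    then show "fill_bottoms \<theta> (Suc m) T c = {}"
      using SVT_outside[OF T] column_bottoms_subset[of \<theta>] unfolding fill_bottoms_def by auto
  next
    fix c assume "c \<in> \<theta>"
    then show "fill_bottoms \<theta> (Suc m) T c \<noteq> {}"
      using SVT_box(1)[OF T, of c] unfolding fill_bottoms_def by auto
    have "T c \<subseteq> {1..Suc m}" if "c \<notin> column_bottoms \<theta>"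
      using SVT_box(2)[OF T, of c] \<open>c \<in> \<theta>\<close> that by fastforce
    then show "fill_bottoms \<theta> (Suc m) T c \<subseteq> {1..Suc m}"
      unfolding fill_bottoms_def by auto
  next
    fix i j assume row: "(i, j) \<in> \<theta> \<and> (i, j + 1) \<in> \<theta>"
    show "Max (fill_bottoms \<theta> (Suc m) T (i, j)) \<le> Min (fill_bottoms \<theta> (Suc m) T (i, j + 1))"
    proof (cases "(i, j) \<in> column_bottoms \<theta>")
      case True
      then have "(i, j + 1) \<in> column_bottoms \<theta>"
        using column_bottoms_right_neighbour[OF closed] row by blast
      then show ?thesis using True unfolding fill_bottoms_def by simp
    next
      case False
      then show ?thesis
        using T Max_less[of "(i, j)"] row unfolding fill_bottoms_def SVT_def by auto
    qed
  next
    fix i j assume column: "(i, j) \<in> \<theta> \<and> (i + 1, j) \<in> \<theta>"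
    then have "(i, j) \<in> \<theta> - column_bottoms \<theta>" unfolding column_bottoms_def by auto
    then show "Max (fill_bottoms \<theta> (Suc m) T (i, j)) < Min (fill_bottoms \<theta> (Suc m) T (i + 1, j))"
      using T Max_less column unfolding fill_bottoms_def SVT_def by auto
  qed
qed

lemma toggle_sites_fill_bottoms: "toggle_sites \<theta> n (fill_bottoms \<theta> n T) = {}"
  unfolding toggle_sites_def fill_bottoms_def by auto

lemma clear_fill_bottoms:
  assumes "T \<in> SVT (\<theta> - column_bottoms \<theta>) m"
  shows "clear_bottoms \<theta> (fill_bottoms \<theta> n T) = T"
proof
  fix c show "clear_bottoms \<theta> (fill_bottoms \<theta> n T) c = T c"
    using SVT_outside[OF assms, of c] unfolding clear_bottoms_def fill_bottoms_def by auto
qed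

lemma fill_clear_bottoms:
  assumes "\<forall>b\<in>column_bottoms \<theta>. T b = {n}"
  shows "fill_bottoms \<theta> n (clear_bottoms \<theta> T) = T"
  using assms unfolding clear_bottoms_def fill_bottoms_def by (intro ext) auto

lemma svt_sign_clear_bottoms:
  assumes fin: "finite \<theta>" and bottoms: "\<forall>b\<in>column_bottoms \<theta>. T b = {n}"
  shows "svt_sign (\<theta> - column_bottoms \<theta>) (clear_bottoms \<theta> T) = svt_sign \<theta> T"
proof -
  let ?D = "column_bottoms \<theta>"
  have "tsize \<theta> T = (\<Sum>c\<in>\<theta> - ?D. card (T c)) + (\<Sum>c\<in>?D. card (T c))"
    unfolding tsize_def using fin column_bottoms_subset by (metis sum.subset_diff)
  also have "(\<Sum>c\<in>?D. card (T c)) = card ?D" using bottoms by simp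
  also have "(\<Sum>c\<in>\<theta> - ?D. card (T c)) = tsize (\<theta> - ?D) (clear_bottoms \<theta> T)"
    unfolding tsize_def clear_bottoms_def by (rule sum.cong) auto
  finally have "tsize \<theta> T = tsize (\<theta> - ?D) (clear_bottoms \<theta> T) + card ?D" .
  moreover have "card \<theta> = card (\<theta> - ?D) + card ?D"
    using fin column_bottoms_subset by (metis card_Diff_subset finite_subset le_add_diff_inverse2 card_mono)
  ultimately show ?thesis unfolding svt_sign_def by simp
qed

lemma sum_svt_sign_without_toggle_sites:
  assumes fin: "finite \<theta>" and closed: "skew_closed \<theta>"
  shows "(\<Sum>T\<in>{T\<in>SVT \<theta> (Suc m). toggle_sites \<theta> (Suc m) T = {}}. svt_sign \<theta> T) =
         (\<Sum>T\<in>SVT (\<theta> - column_bottoms \<theta>) m. svt_sign (\<theta> - column_bottoms \<theta>) T)"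
proof (rule sum.reindex_bij_witness[where i = "fill_bottoms \<theta> (Suc m)" and j = "clear_bottoms \<theta>"])
  fix T assume "T \<in> {T\<in>SVT \<theta> (Suc m). toggle_sites \<theta> (Suc m) T = {}}"
  then have T: "T \<in> SVT \<theta> (Suc m)" and bottoms: "\<forall>b\<in>column_bottoms \<theta>. T b = {Suc m}"
    using toggle_sites_empty_imp_bottoms[OF fin closed] by auto
  show "fill_bottoms \<theta> (Suc m) (clear_bottoms \<theta> T) = T" using fill_clear_bottoms[OF bottoms] .
  show "clear_bottoms \<theta> T \<in> SVT (\<theta> - column_bottoms \<theta>) m" using clear_bottoms_in_SVT[OF T] .
  show "svt_sign (\<theta> - column_bottoms \<theta>) (clear_bottoms \<theta> T) = svt_sign \<theta> T"
    using svt_sign_clear_bottoms[OF fin bottoms] .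
next
  fix T assume T: "T \<in> SVT (\<theta> - column_bottoms \<theta>) m"
  show "clear_bottoms \<theta> (fill_bottoms \<theta> (Suc m) T) = T" using clear_fill_bottoms[OF T] .
  show "fill_bottoms \<theta> (Suc m) T \<in> {T\<in>SVT \<theta> (Suc m). toggle_sites \<theta> (Suc m) T = {}}"
    using fill_bottoms_in_SVT[OF closed T] toggle_sites_fill_bottoms by blast
qed

lemma sum_svt_sign_eq_1:
  assumes "finite \<theta>" "skew_closed \<theta>" "\<forall>j. card {i. (i, j) \<in> \<theta>} \<le> n"
  shows "(\<Sum>T\<in>SVT \<theta> n. svt_sign \<theta> T) = 1"
  using assms
proof (induction n arbitrary: \<theta>)
  case 0
  then have "\<theta> = {}" using empty_if_column_cards_zero by simp
  moreover have "SVT {} 0 = {\<lambda>_. {}}" unfolding SVT_def by auto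
  ultimately show ?case unfolding svt_sign_def tsize_def by simp
next
  case (Suc m)
  let ?S = "SVT \<theta> (Suc m)"
  have "(\<Sum>T\<in>?S. svt_sign \<theta> T) =
        (\<Sum>T\<in>{T\<in>?S. toggle_sites \<theta> (Suc m) T = {}}. svt_sign \<theta> T) +
        (\<Sum>T\<in>{T\<in>?S. toggle_sites \<theta> (Suc m) T \<noteq> {}}. svt_sign \<theta> T)"
    using sum.Int_Diff[OF finite_SVT[OF Suc.prems(1)],
                 where g = "svt_sign \<theta>" and B = "{T. toggle_sites \<theta> (Suc m) T = {}}"]
    by (simp add: Int_def set_diff_eq)
  also have "(\<Sum>T\<in>{T\<in>?S. toggle_sites \<theta> (Suc m) T \<noteq> {}}. svt_sign \<theta> T) = 0"
    using sum_svt_sign_with_toggle_sites[OF Suc.prems(1)] .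
  also have "(\<Sum>T\<in>{T\<in>?S. toggle_sites \<theta> (Suc m) T = {}}. svt_sign \<theta> T) =
             (\<Sum>T\<in>SVT (\<theta> - column_bottoms \<theta>) m. svt_sign (\<theta> - column_bottoms \<theta>) T)"
    using sum_svt_sign_without_toggle_sites[OF Suc.prems(1,2)] .
  also have "\<dots> = 1"
    using Suc.prems skew_closed_diff_column_bottoms card_column_diff_column_bottoms by (intro Suc.IH) auto
  finally show ?case by simp
qed

lemma groth_const_eq_sum_svt_sign:
  fixes \<beta> :: complex
  assumes fin: "finite \<theta>" and "\<beta> \<noteq> 0"
  shows "groth \<theta> n (\<lambda>_. \<beta>) (- 1 / \<beta>) = \<beta> ^ card \<theta> * of_int (\<Sum>T\<in>SVT \<theta> n. svt_sign \<theta> T)"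
proof -
  have "(- 1 / \<beta>) ^ (tsize \<theta> T - card \<theta>) * (\<Prod>k=1..n. \<beta> ^ omega \<theta> T k) =
        \<beta> ^ card \<theta> * of_int (svt_sign \<theta> T)" if T: "T \<in> SVT \<theta> n" for T
  proof -
    obtain e where e: "tsize \<theta> T = card \<theta> + e" using card_le_tsize[OF T fin] le_Suc_ex by blast
    have "(\<Prod>k=1..n. \<beta> ^ omega \<theta> T k) = \<beta> ^ tsize \<theta> T"
      using sum_omega_eq_tsize[OF T fin] power_sum[of \<beta> "omega \<theta> T" "{1..n}"] by simp
    then have "(- 1 / \<beta>) ^ (tsize \<theta> T - card \<theta>) * (\<Prod>k=1..n. \<beta> ^ omega \<theta> T k) =
               ((- 1 / \<beta>) ^ e * \<beta> ^ e) * \<beta> ^ card \<theta>"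
      unfolding e by (simp add: power_add)
    also have "(- 1 / \<beta>) ^ e * \<beta> ^ e = (- 1) ^ e"
      using assms(2) by (simp add: power_mult_distrib[symmetric])
    finally show ?thesis unfolding svt_sign_def e by simp
  qed
  then show ?thesis unfolding groth_def by (simp add: sum_distrib_left)
qed

lemma finite_young: "finite (young lam)"
proof (rule finite_subset)
  show "young lam \<subseteq> {..length lam} \<times> {..Max (insert 0 (set lam))}"
  proof
    fix b assume "b \<in> young lam"
    then obtain i j where b: "b = (i, j)" "1 \<le> i" "i \<le> length lam" "j \<le> lam ! (i - 1)"
      unfolding young_def by auto
    then have "lam ! (i - 1) \<le> Max (insert 0 (set lam))" by simp
    then have "j \<le> Max (insert 0 (set lam))" using b(4) by linarith
    then show "b \<in> {..length lam} \<times> {..Max (insert 0 (set lam))}" using b by auto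
  qed
qed auto

lemma skew_closed_skew:
  assumes "is_partition mu"
  shows "skew_closed (skew lam mu)"
  unfolding skew_closed_def
proof (intro allI impI)
  fix i j
  assume square: "(i, j) \<in> skew lam mu \<and> (i, j + 1) \<in> skew lam mu \<and> (i + 1, j + 1) \<in> skew lam mu"
  have "(i + 1, j) \<notin> young mu"
  proof
    assume "(i + 1, j) \<in> young mu"
    then have mu: "i < length mu" "j \<le> mu ! i" unfolding young_def by auto
    have "1 \<le> i" "1 \<le> j" using square unfolding skew_def young_def by auto
    moreover have "mu ! i \<le> mu ! (i - 1)"
      using assms mu(1) \<open>1 \<le> i\<close> sorted_wrt_nth_less[of "(\<ge>)" mu "i - 1" i]
      unfolding is_partition_def by simp
    ultimately have "(i, j) \<in> young mu" using mu unfolding young_def by auto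
    then show False using square unfolding skew_def by auto
  qed
  moreover have "(i + 1, j) \<in> young lam" using square unfolding skew_def young_def by auto
  ultimately show "(i + 1, j) \<in> skew lam mu" unfolding skew_def by auto
qed

theorem theoremB1:
  fixes n :: nat and lam mu :: "nat list" and beta :: complex
  assumes "0 < n"
    and "is_partition lam" and "is_partition mu"
    and "young mu \<subseteq> young lam"
    and "\<forall>j. card {i. (i, j) \<in> skew lam mu} \<le> n"
    and "beta \<noteq> 0"
  shows "groth (skew lam mu) n (\<lambda>_. beta) (- 1 / beta) = beta ^ card (skew lam mu)"
proof -
  let ?\<theta> = "skew lam mu"
  have fin: "finite ?\<theta>" unfolding skew_def using finite_young by blast
  have "groth ?\<theta> n (\<lambda>_. beta) (- 1 / beta) =
        beta ^ card ?\<theta> * of_int (\<Sum>T\<in>SVT ?\<theta> n. svt_sign ?\<theta> T)"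
    using groth_const_eq_sum_svt_sign[OF fin assms(6)] .
  also have "(\<Sum>T\<in>SVT ?\<theta> n. svt_sign ?\<theta> T) = 1"
    using sum_svt_sign_eq_1[OF fin skew_closed_skew[OF assms(3)] assms(5)] .
  finally show ?thesis by simp
qed

end
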